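(* Let $\tau\ge\tfrac32$. For every family of probability distributions $\{p(a,b|x,y)\}_{a,b,x,y\in\{0,1\}}$ satisfying the no-signaling conditions (i.e. the marginals $p_A(a|x)=\sum_b p(a,b|x,y)$ are independent of $y$ and $p_B(b|y)=\sum_a p(a,b|x,y)$ are independent of $x$), in particular for all distributions arising from quantum states and local measurements, one has $S^{(\tau)}=p(0,0|0,0)-p(0,0|1,1)+(1-\tau)[p(0,0|0,1)+p(0,0|1,0)]-\tau[p(0,1|0,1)+p(1,0|1,0)]\le 0.$
   Context: $p(a,b|x,y)$ denotes the joint probability of outcomes $a,b\in\{0,1\}$ for Alice and Bob given their measurement settings $x,y\in\{0,1\}$; each $p(\cdot,\cdot|x,y)$ is a probability distribution on $\{0,1\}^2$. *)

theory Defs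
  imports Complex_Main
begin

text \<open>A behaviour p a b x y = p(a,b|x,y), with outcomes a,b and settings x,y in {0,1}.\<close>

definition is_behaviour :: "(nat \<Rightarrow> nat \<Rightarrow> nat \<Rightarrow> nat \<Rightarrow> real) \<Rightarrow> bool" where
  "is_behaviour p \<longleftrightarrow>
     (\<forall>x\<in>{0,1}. \<forall>y\<in>{0,1}.
        (\<forall>a\<in>{0,1}. \<forall>b\<in>{0,1}. p a b x y \<ge> 0) \<and>
        (\<Sum>a\<in>{0::nat,1}. \<Sum>b\<in>{0::nat,1}. p a b x y) = 1)"

definition no_signaling :: "(nat \<Rightarrow> nat \<Rightarrow> nat \<Rightarrow> nat \<Rightarrow> real) \<Rightarrow> bool" where
  "no_signaling p \<longleftrightarrow>
     (\<forall>a\<in>{0,1}. \<forall>x\<in>{0,1}. \<forall>y\<in>{0,1}. \<forall>y'\<in>{0,1}.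
        (\<Sum>b\<in>{0::nat,1}. p a b x y) = (\<Sum>b\<in>{0::nat,1}. p a b x y')) \<and>
     (\<forall>b\<in>{0,1}. \<forall>y\<in>{0,1}. \<forall>x\<in>{0,1}. \<forall>x'\<in>{0,1}.
        (\<Sum>a\<in>{0::nat,1}. p a b x y) = (\<Sum>a\<in>{0::nat,1}. p a b x' y))"

definition S_tau :: "real \<Rightarrow> (nat \<Rightarrow> nat \<Rightarrow> nat \<Rightarrow> nat \<Rightarrow> real) \<Rightarrow> real" where
  "S_tau \<tau> p = p 0 0 0 0 - p 0 0 1 1 + (1 - \<tau>) * (p 0 0 0 1 + p 0 0 1 0)
                 - \<tau> * (p 0 1 0 1 + p 1 0 1 0)"

end

theory Submission
  imports Defs
begin

text \<open>
  Write  s = p(00|01) + p(00|10) + p(01|01) + p(10|10)  for the total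
  weight of the four probabilities entering S with a coefficient depending on tau.
  No-signaling on Alice's side gives p(00|00) + p(01|00) = p(00|01) + p(01|01), and on
  Bob's side p(00|00) + p(10|00) = p(00|10) + p(10|10); by nonnegativity both right-hand
  sides bound p(00|00), so  2 p(00|00) <= s.  Dropping -p(00|11) and rewriting the
  remaining terms then yields the tau-independent bound  S <= (3/2 - tau) s,
  valid for every tau.  Since s >= 0, the theorem follows for tau >= 3/2.
\<close>

lemma behaviour_nonneg:
  assumes "is_behaviour p" and "a \<in> {0,1}" "b \<in> {0,1}" "x \<in> {0,1}" "y \<in> {0,1}"
  shows "p a b x y \<ge> 0"
  using assms unfolding is_behaviour_def by blast

lemma no_signaling_alice:
  assumes "no_signaling p" and "a \<in> {0,1}" "x \<in> {0,1}" "y \<in> {0,1}" "y' \<in> {0,1}"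
  shows "p a 0 x y + p a 1 x y = p a 0 x y' + p a 1 x y'"
proof -
  have "(\<Sum>b\<in>{0::nat,1}. p a b x y) = (\<Sum>b\<in>{0::nat,1}. p a b x y')"
    using assms unfolding no_signaling_def by blast
  then show ?thesis by simp
qed

lemma no_signaling_bob:
  assumes "no_signaling p" and "b \<in> {0,1}" "y \<in> {0,1}" "x \<in> {0,1}" "x' \<in> {0,1}"
  shows "p 0 b x y + p 1 b x y = p 0 b x' y + p 1 b x' y"
proof -
  have "(\<Sum>a\<in>{0::nat,1}. p a b x y) = (\<Sum>a\<in>{0::nat,1}. p a b x' y)"
    using assms unfolding no_signaling_def by blast
  then show ?thesis by simp
qed

lemma S_tau_bound:
  assumes beh: "is_behaviour p" and ns: "no_signaling p"
  shows "S_tau \<tau> p \<le> (3/2 - \<tau>) * (p 0 0 0 1 + p 0 0 1 0 + p 0 1 0 1 + p 1 0 1 0)"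
proof -
  have alice: "p 0 0 0 0 + p 0 1 0 0 = p 0 0 0 1 + p 0 1 0 1"
    using no_signaling_alice[OF ns, of 0 0 0 1] by simp
  have bob: "p 0 0 0 0 + p 1 0 0 0 = p 0 0 1 0 + p 1 0 1 0"
    using no_signaling_bob[OF ns, of 0 0 0 1] by simp
  have nonneg: "p 0 1 0 0 \<ge> 0" "p 1 0 0 0 \<ge> 0" "p 0 0 1 1 \<ge> 0"
    "p 0 0 0 1 \<ge> 0" "p 0 0 1 0 \<ge> 0" "p 0 1 0 1 \<ge> 0" "p 1 0 1 0 \<ge> 0"
    by (auto intro: behaviour_nonneg[OF beh])
  have "2 * p 0 0 0 0 \<le> p 0 0 0 1 + p 0 0 1 0 + p 0 1 0 1 + p 1 0 1 0"
    using alice bob nonneg by linarith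
  then show ?thesis
    unfolding S_tau_def using nonneg by (simp add: algebra_simps)
qed

theorem mainTheorem2:
  fixes \<tau> :: real and p :: "nat \<Rightarrow> nat \<Rightarrow> nat \<Rightarrow> nat \<Rightarrow> real"
  assumes "\<tau> \<ge> 3/2" and "is_behaviour p" and "no_signaling p"
  shows "S_tau \<tau> p \<le> 0"
proof -
  define s where "s = p 0 0 0 1 + p 0 0 1 0 + p 0 1 0 1 + p 1 0 1 0"
  have "s \<ge> 0"
    unfolding s_def using behaviour_nonneg[OF assms(2)] by (simp add: add_nonneg_nonneg)
  then have "(3/2 - \<tau>) * s \<le> 0"
    using assms(1) by (simp add: mult_nonpos_nonneg)
  then show ?thesis
    using S_tau_bound[OF assms(2,3), of \<tau>] unfolding s_def by linarith
qed

end
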